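(* Let $q$ be an odd prime power. For $1\leq i\leq k$, let $b_i\in\mathbb{F}_q$ and let $l_i,s_i$ be positive integers with $l_i$ odd; let $\delta\in\mathbb{F}_{q^2}$. Let $\varepsilon$ be a primitive element of $\mathbb{F}_{q^2}$ and $t=(q+1)/2$. Then the polynomial $$P(x)=-x+\sum_{i=1}^k b_i\varepsilon^{tl_i}\left((x^q+x+\delta)^{s_i}+(x^q+x+\delta)^{qs_i}\right)$$ permutes $\mathbb{F}_{q^2}$, and its compositional inverse over $\mathbb{F}_{q^2}$ is $$P^{-1}(x)=-x+\sum_{i=1}^k b_i\varepsilon^{tl_i}\left((-x^q-x+\delta)^{s_i}+(-x^q-x+\delta)^{qs_i}\right).$$
   Context: The compositional inverse of a permutation polynomial $f$ of $\mathbb{F}_{Q}$ is the unique polynomial $f^{-1}$ (modulo $x^Q-x$) with $f(f^{-1}(c))=f^{-1}(f(c))=c$ for all $c\in\mathbb{F}_Q$. *)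

theory Defs
  imports "HOL-Number_Theory.Number_Theory"
begin

definition primitive_element :: "'a::{field,finite} \<Rightarrow> bool" where
  "primitive_element e \<longleftrightarrow> e \<noteq> 0 \<and> (\<forall>x. x \<noteq> 0 \<longrightarrow> (\<exists>n::nat. x = e ^ n))"

end

theory Submission
  imports Defs
begin

text \<open>
  Let T x = x^q + x be the trace from F_{q^2} to F_q; it is additive because the Frobenius
  map x \<mapsto> x^q is. Both polynomials have the shape x \<mapsto> -x + G (\<plusminus>T x), where
  G u = \<Sum>i. c_i ((u + \<delta>)^{s_i} + (u + \<delta>)^{q s_i}) and c_i = b_i \<epsilon>^{t l_i}.
  As \<epsilon>^{(q^2-1)/2} = -1 and l_i is odd, c_i^q = -c_i; hence every value of G is negated
  by the Frobenius map, i.e. lies in the kernel of T. Therefore T (P x) = -T x, and the two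
  maps undo each other.
\<close>

lemma additive_kernel_shift_inverse:
  fixes T :: "'a::ab_group_add \<Rightarrow> 'b::ab_group_add" and G :: "'b \<Rightarrow> 'a"
  assumes "additive T" and "\<And>u. T (G u) = 0"
    and P: "\<And>x. P x = - x + G (T x)" and Pinv: "\<And>x. Pinv x = - x + G (- T x)"
  shows "bij P \<and> (\<forall>x. P (Pinv x) = x \<and> Pinv (P x) = x)"
proof -
  interpret additive T by fact
  have T_P: "T (P x) = - T x" and T_Pinv: "T (Pinv x) = - T x" for x
    by (simp_all only: P Pinv add minus assms(2) add_0_right)
  have "P (Pinv x) = x" and "Pinv (P x) = x" for x
    by (simp_all only: P[of "Pinv x"] Pinv[of "P x"] T_P T_Pinv) (simp_all add: P Pinv)
  moreover from this have "bij P"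
    by (intro o_bij[of Pinv]) (auto simp: fun_eq_iff)
  ultimately show ?thesis
    by blast
qed

lemma additive_power_CHAR_power:
  assumes "prime CHAR('a::comm_ring_1)" and "q = CHAR('a) ^ n"
  shows "additive (\<lambda>x::'a. x ^ q)"
  by unfold_locales (rule freshmans_dream'[OF assms])

text \<open>
  The library versions of the next two facts (\<open>finite_field_power_card_eq_same\<close>) require the
  sort \<open>finite_field\<close>, which the sort \<open>{field, finite}\<close> of the theorem does not provide.
\<close>

lemma field_power_card_minus_one:
  fixes x :: "'a::{field,finite}"
  assumes "x \<noteq> 0"
  shows "x ^ (card (UNIV :: 'a set) - 1) = 1"
proof -
  let ?U = "UNIV - {0::'a}"
  have "bij_betw ((*) x) ?U ?U"
    using assms by (intro bij_betwI[of _ _ _ "\<lambda>y. y / x"]) auto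
  then have "(\<Prod>y\<in>?U. x * y) = \<Prod>?U"
    by (rule prod.reindex_bij_betw)
  moreover have "(\<Prod>y\<in>?U. x * y) = x ^ card ?U * \<Prod>?U"
    by (simp add: prod.distrib)
  moreover have "\<Prod>?U \<noteq> 0"
    by simp
  ultimately show ?thesis
    by (simp add: card_Diff_singleton)
qed

lemma field_power_card:
  fixes x :: "'a::{field,finite}"
  shows "x ^ card (UNIV :: 'a set) = x"
proof (cases "x = 0")
  case False
  have "x ^ card (UNIV :: 'a set) = x * x ^ (card (UNIV :: 'a set) - 1)"
    using finite_UNIV_card_ge_0[where 'a = 'a] by (simp flip: power_Suc)
  with field_power_card_minus_one[OF False] show ?thesis
    by simp
qed (simp add: finite_UNIV_card_ge_0)

lemma prime_CHAR_finite_field: "prime CHAR('a::{field,finite})"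
  by (simp add: prime_CHAR_semidom finite_imp_CHAR_pos)

lemma primepow_card_imp_CHAR_power:
  assumes "primepow q" and "card (UNIV :: 'a::{field,finite} set) = q ^ m" and "m > 0"
  shows "\<exists>n. q = CHAR('a) ^ n"
proof -
  obtain p n where "prime p" and q: "q = p ^ n"
    using assms(1) unfolding primepow_def by auto
  have "CHAR('a) dvd p ^ (n * m)"
    using CHAR_dvd_CARD[where 'a = 'a] assms(2) q by (simp add: power_mult)
  then have "CHAR('a) = p"
    using prime_CHAR_finite_field \<open>prime p\<close> prime_dvd_power primes_dvd_imp_eq by blast
  with q show ?thesis
    by blast
qed

lemma power_eq_power_mod:
  fixes x :: "'a::monoid_mult"
  assumes "x ^ N = 1"
  shows "x ^ m = x ^ (m mod N)"
proof -
  have "x ^ m = (x ^ N) ^ (m div N) * x ^ (m mod N)"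
    by (simp flip: power_mult power_add)
  with assms show ?thesis
    by simp
qed

lemma primitive_element_power_half_card:
  fixes e :: "'a::{field,finite}"
  assumes "primitive_element e" and "odd (card (UNIV :: 'a set))"
  shows "e ^ ((card (UNIV :: 'a set) - 1) div 2) = -1"
proof -
  define N where "N = (card (UNIV :: 'a set) - 1) div 2"
  have "card {0, 1::'a} \<le> card (UNIV :: 'a set)"
    by (rule card_mono) auto
  with assms(2) have card: "card (UNIV :: 'a set) - 1 = 2 * N" "N > 0"
    unfolding N_def by simp_all presburger+
  have "e \<noteq> 0"
    using assms(1) unfolding primitive_element_def by simp
  then have "(e ^ N) ^ 2 = 1"
    using field_power_card_minus_one[of e] card by (simp flip: power_mult add: mult.commute)
  moreover have "e ^ N \<noteq> 1"
  proof
    assume "e ^ N = 1"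
    have "UNIV - {0} \<subseteq> (\<lambda>m. e ^ m) ` {..<N}"
    proof
      fix x :: 'a assume "x \<in> UNIV - {0}"
      then obtain m where "x = e ^ m"
        using assms(1) unfolding primitive_element_def by auto
      then have "x = e ^ (m mod N)"
        using power_eq_power_mod[OF \<open>e ^ N = 1\<close>] by simp
      then show "x \<in> (\<lambda>m. e ^ m) ` {..<N}"
        using \<open>N > 0\<close> by auto
    qed
    then have "card (UNIV - {0::'a}) \<le> card ((\<lambda>m. e ^ m) ` {..<N})"
      by (intro card_mono) auto
    also have "\<dots> \<le> N"
      using card_image_le[of "{..<N}"] by simp
    finally show False
      using card by (simp add: card_Diff_singleton)
  qed
  ultimately have "e ^ N = -1"
    by (metis power2_eq_1_iff)
  then show ?thesis
    by (simp add: N_def)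
qed

lemma primitive_element_power_anti_invariant:
  fixes e :: "'a::{field,finite}"
  assumes "primitive_element e" and "card (UNIV :: 'a set) = q ^ 2" and "odd q" and "odd l"
  shows "(e ^ ((q + 1) div 2 * l)) ^ q = - (e ^ ((q + 1) div 2 * l))"
proof -
  define t where "t = (q + 1) div 2"
  obtain r where q: "q = 2 * r + 1"
    using \<open>odd q\<close> oddE by blast
  \<comment> \<open>because \<open>t * (q - 1) = (q\<^sup>2 - 1) div 2\<close>\<close>
  have exponent: "t * l * q = t * l + (card (UNIV :: 'a set) - 1) div 2 * l"
    unfolding t_def assms(2) q by (simp add: algebra_simps power2_eq_square)
  have "e ^ ((card (UNIV :: 'a set) - 1) div 2) = -1"
    using assms by (intro primitive_element_power_half_card) auto
  with \<open>odd l\<close> show ?thesis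
    unfolding t_def[symmetric]
    by (simp add: exponent flip: power_mult) (simp add: power_add power_mult)
qed

lemma frobenius_anti_invariant_mult_trace:
  fixes c y :: "'a::comm_ring_1"
  assumes "additive (\<lambda>x::'a. x ^ q)" and "c ^ q = - c" and "(y ^ q) ^ q = y"
  shows "(c * (y + y ^ q)) ^ q = - (c * (y + y ^ q))"
  using additive.add[OF assms(1)] assms(2,3) by (simp add: power_mult_distrib algebra_simps)

theorem theorem3p8:
  fixes q k :: nat and b :: "nat \<Rightarrow> 'a::{field,finite}" and l s :: "nat \<Rightarrow> nat"
    and \<delta> \<epsilon> :: 'a and t :: nat and P Pinv :: "'a \<Rightarrow> 'a"
  assumes "primepow q" and "odd q" and "card (UNIV :: 'a set) = q ^ 2"
    and "\<forall>i\<in>{1..k}. b i ^ q = b i"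
    and "\<forall>i\<in>{1..k}. l i > 0 \<and> odd (l i) \<and> s i > 0"
    and "primitive_element \<epsilon>"
  defines "t \<equiv> (q + 1) div 2"
    and "P \<equiv> \<lambda>x. - x + (\<Sum>i=1..k. b i * \<epsilon> ^ (t * l i) *
            ((x ^ q + x + \<delta>) ^ s i + (x ^ q + x + \<delta>) ^ (q * s i)))"
    and "Pinv \<equiv> \<lambda>x. - x + (\<Sum>i=1..k. b i * \<epsilon> ^ (t * l i) *
            ((- (x ^ q) - x + \<delta>) ^ s i + (- (x ^ q) - x + \<delta>) ^ (q * s i)))"
  shows "bij P \<and> (\<forall>x. P (Pinv x) = x \<and> Pinv (P x) = x)"
proof -
  obtain n where "q = CHAR('a) ^ n"
    using primepow_card_imp_CHAR_power[OF assms(1,3)] by auto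
  then have frob: "additive (\<lambda>x::'a. x ^ q)"
    by (intro additive_power_CHAR_power prime_CHAR_finite_field)
  have frob_involution: "(x ^ q) ^ q = x" for x :: 'a
    using field_power_card[of x] assms(3) by (simp flip: power_mult add: power2_eq_square)
  define c where "c i = b i * \<epsilon> ^ (t * l i)" for i
  have c_anti: "c i ^ q = - c i" if "i \<in> {1..k}" for i
    using that assms(4,5) primitive_element_power_anti_invariant[OF assms(6,3,2)]
    by (simp add: c_def t_def power_mult_distrib)
  define G where "G u = (\<Sum>i=1..k. c i * ((u + \<delta>) ^ s i + (u + \<delta>) ^ (q * s i)))" for u
  have "additive (\<lambda>x::'a. x ^ q + x)"
    using additive.add[OF frob] by unfold_locales simp
  moreover have "G u ^ q + G u = 0" for u
  proof -
    have "(u + \<delta>) ^ (q * s i) = ((u + \<delta>) ^ s i) ^ q" for i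
      by (metis mult.commute power_mult)
    then show ?thesis
      unfolding G_def additive.sum[OF frob]
      by (simp add: frobenius_anti_invariant_mult_trace[OF frob] c_anti frob_involution
          sum_negf del: power_minus)
  qed
  ultimately show ?thesis
    by (rule additive_kernel_shift_inverse[where G = G])
      (simp_all add: P_def Pinv_def G_def c_def mult.assoc algebra_simps)
qed

end
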